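(* Let $\Phi:\mathbb R^d\to\mathbb R$ have a unique minimizer $\theta^*$ and be twice continuously differentiable near $\theta^*$ with positive definite Hessian $\nabla^2\Phi(\theta^* )$ having eigenvalues $0<\lambda_1\le\cdots\le\lambda_d$. Let $\Gamma\in\mathbb R^{d\times d}$ be a symmetric positive semi-definite matrix (the covariance matrix $\mathbb E[g(X_1,\theta^* )g(X_1,\theta^* )^\top]$ of the stochastic gradient at $\theta^*$), and let $\delta>1/\lambda_1$. Define $$\Sigma=\delta\int_0^\infty e^{t/\delta}e^{-t\nabla^2\Phi(\theta^* )}\Gamma e^{-t\nabla^2\Phi(\theta^* )}\,dt,\qquad \Delta=\nabla^2\Phi(\theta^* )^{-1}\Gamma\,\nabla^2\Phi(\theta^* )^{-1}.$$ Then $\Sigma-\Delta$ is positive semi-definite and $$\|\Sigma-\Delta\|_{\mathrm{op}}\le\frac{(\delta\lambda_d-1)^2}{2\delta\lambda_d-1}\|\Delta\|_{\mathrm{op}}.$$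
   Context: $\|M\|_{\mathrm{op}}$ is the operator norm of a symmetric matrix $M$, i.e. its largest eigenvalue in absolute value. *)

theory Defs
  imports "HOL-Analysis.Analysis"
begin

primrec matpow :: "real^'n^'n \<Rightarrow> nat \<Rightarrow> real^'n^'n" where
  "matpow A 0 = mat 1"
| "matpow A (Suc k) = A ** matpow A k"

definition mexp :: "real^'n^'n \<Rightarrow> real^'n^'n" where
  "mexp A = (\<Sum>k. (1 / fact k) *\<^sub>R matpow A k)"

definition eigenvalues :: "real^'n^'n \<Rightarrow> real set" where
  "eigenvalues M = {c. \<exists>v. v \<noteq> 0 \<and> M *v v = c *\<^sub>R v}"

text \<open>Operator norm of a symmetric matrix: largest eigenvalue in absolute value.\<close>

definition opnorm :: "real^'n^'n \<Rightarrow> real" where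
  "opnorm M = Max ((\<lambda>c. \<bar>c\<bar>) ` eigenvalues M)"

definition psd :: "real^'n^'n \<Rightarrow> bool" where
  "psd M \<longleftrightarrow> transpose M = M \<and> (\<forall>x. 0 \<le> x \<bullet> (M *v x))"

definition posdef :: "real^'n^'n \<Rightarrow> bool" where
  "posdef M \<longleftrightarrow> transpose M = M \<and> (\<forall>x. x \<noteq> 0 \<longrightarrow> 0 < x \<bullet> (M *v x))"

definition C2_near_with_hessian :: "(real^'n \<Rightarrow> real) \<Rightarrow> real^'n \<Rightarrow> real^'n^'n \<Rightarrow> bool" where
  "C2_near_with_hessian \<Phi> \<theta> H \<longleftrightarrow>
     (\<exists>e>0. \<exists>g :: real^'n \<Rightarrow> real^'n. \<exists>Hf :: real^'n \<Rightarrow> real^'n^'n.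
        (\<forall>x\<in>ball \<theta> e. (\<Phi> has_derivative (\<lambda>h. g x \<bullet> h)) (at x)
                        \<and> (g has_derivative (\<lambda>h. Hf x *v h)) (at x))
        \<and> continuous_on (ball \<theta> e) Hf \<and> Hf \<theta> = H)"

end

theory Submission
  imports Defs
begin

text \<open>Let \<open>b\<close> run through an orthonormal eigenbasis of \<open>H\<close>, with eigenvalues \<open>\<lambda>\<^sub>b\<close>.
  Then \<open>\<Sigma>\<close> and \<open>\<Delta>\<close> are Hadamard products of \<open>\<Gamma>\<^sub>b\<^sub>c = b \<bullet> \<Gamma> c\<close> with the kernels
  \<open>\<delta> / (\<lambda>\<^sub>b + \<lambda>\<^sub>c - 1/\<delta>)\<close> and \<open>1 / (\<lambda>\<^sub>b \<lambda>\<^sub>c)\<close>, whose difference factors as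
  \<open>p\<^sub>b p\<^sub>c / (\<beta>\<^sub>b + \<beta>\<^sub>c)\<close> with \<open>p\<^sub>b = \<delta> - 1/\<lambda>\<^sub>b\<close> and \<open>\<beta>\<^sub>b = \<delta>\<lambda>\<^sub>b - 1/2 > 0\<close>.
  Writing \<open>1 / (\<beta>\<^sub>b + \<beta>\<^sub>c)\<close> as the integral of \<open>exp (-(\<beta>\<^sub>b + \<beta>\<^sub>c) s)\<close> over \<open>s \<ge> 0\<close> turns
  \<open>x \<bullet> (\<Sigma> - \<Delta>) x\<close> into the integral of \<open>w(s) \<bullet> \<Gamma> w(s)\<close>, where
  \<open>w(s) = \<Sum>\<^sub>b p\<^sub>b (b \<bullet> x) exp (-\<beta>\<^sub>b s) b\<close>; hence \<open>\<Sigma> - \<Delta>\<close> is positive semi-definite.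
  Since \<open>w(s) = H\<^sup>-\<^sup>1 u(s)\<close>, the integrand is \<open>u(s) \<bullet> \<Delta> u(s) \<le> \<parallel>\<Delta>\<parallel> |u(s)|\<^sup>2\<close>, and
  integrating gives \<open>\<parallel>\<Delta>\<parallel> \<Sum>\<^sub>b (\<delta>\<lambda>\<^sub>b - 1)\<^sup>2 / (2\<delta>\<lambda>\<^sub>b - 1) (b \<bullet> x)\<^sup>2\<close>; the factor is
  increasing in \<open>\<delta>\<lambda>\<^sub>b > 1\<close>, so it is largest at \<open>\<lambda>\<^sub>d\<close>.\<close>

lemma symmetric_matrix_inner_commute:
  fixes A :: "real^'n^'n"
  assumes "transpose A = A"
  shows "x \<bullet> (A *v y) = (A *v x) \<bullet> y"
  by (metis assms dot_lmul_matrix vector_transpose_matrix)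

lemma linear_coeff_eq_0_if_quadratic_nonpos:
  fixes a b :: real
  assumes "\<And>t. a * t + b * t\<^sup>2 \<le> 0"
  shows "a = 0"
proof (rule ccontr)
  assume "a \<noteq> 0"
  define d where "d = \<bar>b\<bar> + 1"
  define t where "t = a / d"
  have "d > 0" by (simp add: d_def)
  then have "0 < a\<^sup>2 / d\<^sup>2" using \<open>a \<noteq> 0\<close> by simp
  also have "\<dots> = a * t - (d - 1) * t\<^sup>2"
    using \<open>d > 0\<close> unfolding t_def by (simp add: field_simps power2_eq_square)
  also have "\<dots> \<le> a * t + b * t\<^sup>2"
    using mult_right_mono[of "-\<bar>b\<bar>" b "t\<^sup>2"] by (simp add: d_def)
  also have "\<dots> \<le> 0" by (rule assms)
  finally show False by simp
qed

lemma symmetric_rayleigh_maximizer_orthogonal: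
  fixes A :: "real^'n^'n"
  assumes sym: "transpose A = A" and W: "subspace W" and v: "v \<in> W" "v \<bullet> v = 1"
    and max: "\<And>y. y \<in> W \<Longrightarrow> y \<bullet> (A *v y) \<le> (v \<bullet> (A *v v)) * (y \<bullet> y)"
    and w: "w \<in> W"
  shows "w \<bullet> (A *v v - (v \<bullet> (A *v v)) *\<^sub>R v) = 0"
proof -
  define \<mu> where "\<mu> = v \<bullet> (A *v v)"
  have "2 * (w \<bullet> (A *v v) - \<mu> * (v \<bullet> w)) * t + (w \<bullet> (A *v w) - \<mu> * (w \<bullet> w)) * t\<^sup>2 \<le> 0"
    for t :: real
  proof -
    let ?u = "v + t *\<^sub>R w"
    have "?u \<in> W" using W v w by (simp add: subspace_add subspace_scale)
    then have le: "?u \<bullet> (A *v ?u) \<le> \<mu> * (?u \<bullet> ?u)" using max \<mu>_def by blast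
    have "v \<bullet> (A *v w) = w \<bullet> (A *v v)"
      using symmetric_matrix_inner_commute[OF sym, of v w] by (simp add: inner_commute)
    then have e1: "?u \<bullet> (A *v ?u) = \<mu> + 2 * t * (w \<bullet> (A *v v)) + t\<^sup>2 * (w \<bullet> (A *v w))"
      unfolding \<mu>_def
      by (simp add: matrix_vector_right_distrib matrix_vector_mult_scaleR inner_add_left
          inner_add_right power2_eq_square algebra_simps)
    have e2: "?u \<bullet> ?u = 1 + 2 * t * (v \<bullet> w) + t\<^sup>2 * (w \<bullet> w)"
      using v by (simp add: inner_add_left inner_add_right power2_eq_square algebra_simps inner_commute)
    show ?thesis using le unfolding e1 e2 by (simp add: algebra_simps)
  qed
  then have "2 * (w \<bullet> (A *v v) - \<mu> * (v \<bullet> w)) = 0"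
    by (rule linear_coeff_eq_0_if_quadratic_nonpos)
  then show ?thesis unfolding \<mu>_def by (simp add: inner_diff_right inner_commute)
qed

lemma symmetric_eigenvector_in_invariant_subspace:
  fixes A :: "real^'n^'n"
  assumes sym: "transpose A = A" and W: "subspace W" "W \<noteq> {0}"
    and invariant: "\<And>w. w \<in> W \<Longrightarrow> A *v w \<in> W"
  obtains v where "v \<in> W" "norm v = 1" "A *v v = (v \<bullet> (A *v v)) *\<^sub>R v"
proof -
  let ?K = "W \<inter> sphere 0 1"
  obtain r where r: "r \<in> W" "r \<noteq> 0" using W subspace_0 by blast
  have "compact ?K"
    using W closed_subspace compact_sphere closed_Int_compact by blast
  moreover have "r /\<^sub>R norm r \<in> ?K" using r W by (simp add: subspace_scale)
  moreover have "continuous_on ?K (\<lambda>w. w \<bullet> (A *v w))"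
    by (intro continuous_intros matrix_vector_mult_linear_continuous_on)
  ultimately obtain v where v: "v \<in> ?K" and vmax: "\<And>y. y \<in> ?K \<Longrightarrow> y \<bullet> (A *v y) \<le> v \<bullet> (A *v v)"
    using continuous_attains_sup[of ?K] by blast
  have "v \<in> W" "norm v = 1" using v by auto
  then have vv: "v \<bullet> v = 1" by (simp add: dot_square_norm)
  have max: "y \<bullet> (A *v y) \<le> (v \<bullet> (A *v v)) * (y \<bullet> y)" if "y \<in> W" for y
  proof (cases "y = 0")
    case False
    then have "y /\<^sub>R norm y \<in> ?K" using \<open>y \<in> W\<close> W by (simp add: subspace_scale)
    then have "(y /\<^sub>R norm y) \<bullet> (A *v (y /\<^sub>R norm y)) \<le> v \<bullet> (A *v v)"
      by (rule vmax)
    then have "(y \<bullet> (A *v y)) / (norm y)\<^sup>2 \<le> v \<bullet> (A *v v)"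
      by (simp add: matrix_vector_mult_scaleR power2_eq_square divide_inverse mult.commute mult.left_commute)
    then show ?thesis using False by (simp add: dot_square_norm divide_le_eq mult.commute)
  qed simp
  define d where "d = A *v v - (v \<bullet> (A *v v)) *\<^sub>R v"
  have "d \<in> W" unfolding d_def using invariant \<open>v \<in> W\<close> W by (simp add: subspace_diff subspace_scale)
  then have "d \<bullet> d = 0"
    unfolding d_def using symmetric_rayleigh_maximizer_orthogonal[OF sym W(1) \<open>v \<in> W\<close> vv max] by blast
  then show ?thesis using that \<open>v \<in> W\<close> \<open>norm v = 1\<close> unfolding d_def by simp
qed

locale orthonormal_eigensystem =
  fixes A :: "real^'n^'n" and B :: "(real^'n) set"
  assumes pairwise_orthogonal: "pairwise orthogonal B"
    and norm_eigenvector: "b \<in> B \<Longrightarrow> norm b = 1"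
    and eigenvector: "b \<in> B \<Longrightarrow> A *v b = (b \<bullet> (A *v b)) *\<^sub>R b"
begin

abbreviation eig :: "real^'n \<Rightarrow> real" where
  "eig b \<equiv> b \<bullet> (A *v b)"

lemma finite_card_le: "finite B \<and> card B \<le> CARD('n)"
proof -
  have "0 \<notin> B" using norm_eigenvector by force
  with pairwise_orthogonal have "independent B" by (rule pairwise_orthogonal_independent)
  then show ?thesis using independent_bound by force
qed

lemma finite: "finite B"
  using finite_card_le by blast

lemma inner_sum_eigenvectors: "c \<in> B \<Longrightarrow> c \<bullet> (\<Sum>b\<in>B. f b *\<^sub>R b) = f c"
proof -
  assume c: "c \<in> B"
  have "c \<bullet> (\<Sum>b\<in>B. f b *\<^sub>R b) = (\<Sum>b\<in>B. if b = c then f c else 0)"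
  proof (unfold inner_sum_right, rule sum.cong)
    fix b assume b: "b \<in> B"
    show "c \<bullet> f b *\<^sub>R b = (if b = c then f c else 0)"
    proof (cases "b = c")
      case True
      then show ?thesis using norm_eigenvector[OF b] by (simp add: dot_square_norm)
    next
      case False
      then show ?thesis
        using pairwise_orthogonal b c unfolding pairwise_def orthogonal_def by (simp add: inner_commute)
    qed
  qed simp
  also have "\<dots> = f c" using finite c by simp
  finally show ?thesis .
qed

lemma inner_mult_vec_eq_0:
  assumes "transpose A = A" and b: "b \<in> B" and "b \<bullet> w = 0"
  shows "b \<bullet> (A *v w) = 0"
proof -
  have "b \<bullet> (A *v w) = (A *v b) \<bullet> w" by (rule symmetric_matrix_inner_commute[OF assms(1)])
  also have "\<dots> = eig b * (b \<bullet> w)" by (subst eigenvector[OF b]) simp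
  finally show ?thesis using assms(3) by simp
qed

lemma insert_orthogonal_eigenvector:
  assumes "norm v = 1" and "A *v v = (v \<bullet> (A *v v)) *\<^sub>R v" and "\<And>b. b \<in> B \<Longrightarrow> b \<bullet> v = 0"
  shows "orthonormal_eigensystem A (insert v B)"
proof
  show "pairwise orthogonal (insert v B)"
    using pairwise_orthogonal assms(3) unfolding pairwise_insert orthogonal_def
    by (auto simp: inner_commute)
qed (use assms norm_eigenvector eigenvector in auto)

end

locale orthonormal_eigenbasis = orthonormal_eigensystem +
  assumes expansion: "(\<Sum>b\<in>B. (b \<bullet> x) *\<^sub>R b) = x"

text \<open>A maximal orthonormal system of eigenvectors spans: otherwise the
  orthogonal complement of its span is a nonzero \<open>A\<close>-invariant subspace, which contains
  a further unit eigenvector.\<close>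

theorem symmetric_orthonormal_eigenbasis:
  fixes A :: "real^'n^'n"
  assumes sym: "transpose A = A"
  obtains B where "orthonormal_eigenbasis A B"
proof -
  have "orthonormal_eigensystem A {}" by unfold_locales auto
  moreover have "\<forall>B. orthonormal_eigensystem A B \<longrightarrow> card B < Suc CARD('n)"
    using orthonormal_eigensystem.finite_card_le by (metis le_imp_less_Suc)
  ultimately obtain B where B: "orthonormal_eigensystem A B"
    and maximal: "\<And>B'. orthonormal_eigensystem A B' \<Longrightarrow> card B' \<le> card B"
    using ex_has_greatest_nat[of "orthonormal_eigensystem A" "{}" card] by blast
  interpret orthonormal_eigensystem A B by (rule B)
  have "(\<Sum>b\<in>B. (b \<bullet> x) *\<^sub>R b) = x" for x
  proof (rule ccontr)
    assume ne: "(\<Sum>b\<in>B. (b \<bullet> x) *\<^sub>R b) \<noteq> x"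
    define W where "W = {w. \<forall>b\<in>B. b \<bullet> w = 0}"
    have "x - (\<Sum>b\<in>B. (b \<bullet> x) *\<^sub>R b) \<in> W"
      unfolding W_def by (simp add: inner_diff_right inner_sum_eigenvectors)
    with ne have "W \<noteq> {0}" by auto
    have subspace: "subspace W" unfolding W_def subspace_def
      by (auto simp: inner_add_right inner_scaleR_right)
    have invariant: "A *v w \<in> W" if "w \<in> W" for w
      using inner_mult_vec_eq_0[OF sym] \<open>w \<in> W\<close> unfolding W_def by blast
    obtain v where v: "v \<in> W" "norm v = 1" "A *v v = (v \<bullet> (A *v v)) *\<^sub>R v"
      using symmetric_eigenvector_in_invariant_subspace[OF sym subspace \<open>W \<noteq> {0}\<close> invariant] .
    have "v \<notin> B"
    proof
      assume "v \<in> B"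
      then have "v \<bullet> v = 0" using v(1) unfolding W_def by blast
      then show False using v(2) by simp
    qed
    have "orthonormal_eigensystem A (insert v B)"
      using v unfolding W_def by (intro insert_orthogonal_eigenvector) auto
    then have "card (insert v B) \<le> card B" by (rule maximal)
    then show False using finite \<open>v \<notin> B\<close> by simp
  qed
  then have "orthonormal_eigenbasis A B" by unfold_locales
  then show ?thesis by (rule that)
qed

context orthonormal_eigenbasis
begin

lemma nonempty: "B \<noteq> {}"
  using expansion[of "axis undefined 1"] by (auto simp: axis_eq_0_iff)

lemma inner_sum_sum: "(\<Sum>b\<in>B. f b *\<^sub>R b) \<bullet> (\<Sum>b\<in>B. g b *\<^sub>R b) = (\<Sum>b\<in>B. f b * g b)"
  by (simp add: inner_sum_left inner_sum_eigenvectors)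

lemma parseval: "x \<bullet> x = (\<Sum>b\<in>B. (b \<bullet> x)\<^sup>2)"
proof -
  have "x \<bullet> x = (\<Sum>b\<in>B. (b \<bullet> x) *\<^sub>R b) \<bullet> (\<Sum>b\<in>B. (b \<bullet> x) *\<^sub>R b)"
    by (simp only: expansion)
  then show ?thesis by (simp add: inner_sum_sum power2_eq_square)
qed

lemma mult_vec_expansion: "A *v x = (\<Sum>b\<in>B. (eig b * (b \<bullet> x)) *\<^sub>R b)"
proof -
  have "A *v x = (\<Sum>b\<in>B. (b \<bullet> x) *\<^sub>R (A *v b))"
    by (subst (1) expansion[of x, symmetric])
       (simp add: linear_sum[OF matrix_vector_mul_linear] matrix_vector_mult_scaleR)
  also have "\<dots> = (\<Sum>b\<in>B. (eig b * (b \<bullet> x)) *\<^sub>R b)"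
    by (intro sum.cong refl) (subst eigenvector, auto)
  finally show ?thesis .
qed

lemma inner_eigenvector_mult_vec: "b \<in> B \<Longrightarrow> b \<bullet> (A *v x) = eig b * (b \<bullet> x)"
  unfolding mult_vec_expansion[of x] by (rule inner_sum_eigenvectors)

lemma quadratic_form: "x \<bullet> (A *v x) = (\<Sum>b\<in>B. eig b * (b \<bullet> x)\<^sup>2)"
proof -
  have "x \<bullet> (A *v x) = (\<Sum>b\<in>B. (b \<bullet> x) *\<^sub>R b) \<bullet> (\<Sum>b\<in>B. (eig b * (b \<bullet> x)) *\<^sub>R b)"
    by (simp only: expansion mult_vec_expansion[of x, symmetric])
  then show ?thesis by (simp add: inner_sum_sum power2_eq_square mult_ac)
qed

lemma eigenvalues_eq: "eigenvalues A = eig ` B"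
proof
  show "eig ` B \<subseteq> eigenvalues A"
  proof
    fix c assume "c \<in> eig ` B"
    then obtain b where b: "b \<in> B" "c = eig b" by blast
    then have "b \<noteq> 0" using norm_eigenvector by force
    then show "c \<in> eigenvalues A"
      unfolding eigenvalues_def using eigenvector[OF b(1)] b(2) by blast
  qed
  show "eigenvalues A \<subseteq> eig ` B"
  proof
    fix c assume "c \<in> eigenvalues A"
    then obtain v where v: "v \<noteq> 0" "A *v v = c *\<^sub>R v" unfolding eigenvalues_def by blast
    obtain b where b: "b \<in> B" "b \<bullet> v \<noteq> 0"
      using v(1) expansion[of v] by (metis (no_types, lifting) scale_eq_0_iff sum.neutral)
    have "c * (b \<bullet> v) = eig b * (b \<bullet> v)"
      using inner_eigenvector_mult_vec[OF b(1), of v] v(2) by simp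
    then show "c \<in> eig ` B" using b by simp
  qed
qed

lemma Min_eigenvalues_le: "b \<in> B \<Longrightarrow> Min (eigenvalues A) \<le> eig b"
  and le_Max_eigenvalues: "b \<in> B \<Longrightarrow> eig b \<le> Max (eigenvalues A)"
  unfolding eigenvalues_eq using finite by auto

lemma eig_pos_if_posdef:
  assumes "posdef A" and "b \<in> B"
  shows "0 < eig b"
proof -
  have "b \<noteq> 0" using norm_eigenvector[OF assms(2)] by auto
  then show ?thesis using assms(1) unfolding posdef_def by blast
qed

lemma opnorm_eq: "opnorm A = Max ((\<lambda>b. \<bar>eig b\<bar>) ` B)"
  unfolding opnorm_def eigenvalues_eq image_image ..

lemma abs_eig_le_opnorm: "b \<in> B \<Longrightarrow> \<bar>eig b\<bar> \<le> opnorm A"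
  unfolding opnorm_eq using finite by simp

lemma opnorm_nonneg: "0 \<le> opnorm A"
proof -
  obtain b where "b \<in> B" using nonempty by blast
  then show ?thesis using abs_eig_le_opnorm[of b] by linarith
qed

lemma quadratic_form_le_opnorm: "x \<bullet> (A *v x) \<le> opnorm A * (x \<bullet> x)"
proof -
  have "eig b * (b \<bullet> x)\<^sup>2 \<le> opnorm A * (b \<bullet> x)\<^sup>2" if "b \<in> B" for b
    using abs_eig_le_opnorm[OF that] by (intro mult_right_mono) auto
  then have "x \<bullet> (A *v x) \<le> (\<Sum>b\<in>B. opnorm A * (b \<bullet> x)\<^sup>2)"
    unfolding quadratic_form[of x] by (rule sum_mono)
  then show ?thesis by (simp add: parseval sum_distrib_left)
qed

end

lemma symmetric_quadratic_form_le_opnorm: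
  fixes A :: "real^'n^'n"
  assumes "transpose A = A"
  shows "x \<bullet> (A *v x) \<le> opnorm A * (x \<bullet> x)"
proof -
  obtain B where "orthonormal_eigenbasis A B" using symmetric_orthonormal_eigenbasis[OF assms] .
  then show ?thesis by (rule orthonormal_eigenbasis.quadratic_form_le_opnorm)
qed

lemma symmetric_opnorm_nonneg:
  fixes A :: "real^'n^'n"
  assumes "transpose A = A"
  shows "0 \<le> opnorm A"
proof -
  obtain B where "orthonormal_eigenbasis A B" using symmetric_orthonormal_eigenbasis[OF assms] .
  then show ?thesis by (rule orthonormal_eigenbasis.opnorm_nonneg)
qed

lemma psd_opnorm_le:
  fixes A :: "real^'n^'n"
  assumes "psd A" and le: "\<And>x. x \<bullet> (A *v x) \<le> c * (x \<bullet> x)"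
  shows "opnorm A \<le> c"
proof -
  have "transpose A = A" using assms(1) unfolding psd_def by blast
  then obtain B where "orthonormal_eigenbasis A B" by (rule symmetric_orthonormal_eigenbasis)
  then interpret orthonormal_eigenbasis A B .
  have "Max ((\<lambda>b. \<bar>eig b\<bar>) ` B) \<in> (\<lambda>b. \<bar>eig b\<bar>) ` B"
    using finite nonempty by (intro Max_in) auto
  then obtain b where b: "b \<in> B" "opnorm A = \<bar>eig b\<bar>"
    unfolding opnorm_eq by blast
  have "b \<bullet> b = 1" using norm_eigenvector[OF b(1)] by (simp add: dot_square_norm)
  then show ?thesis using b(2) le[of b] assms(1) unfolding psd_def by simp
qed

definition outer :: "real^'n \<Rightarrow> real^'n^'n" where
  "outer b = (\<chi> i j. b$i * b$j)"

lemma outer_mult_vec: "outer b *v x = (b \<bullet> x) *\<^sub>R b"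
  by (simp add: outer_def vec_eq_iff matrix_vector_mult_def inner_vec_def sum_distrib_left mult_ac)

lemma transpose_outer: "transpose (outer b) = outer b"
  by (simp add: outer_def transpose_def vec_eq_iff mult.commute)

lemma sum_mult_vec: "(\<Sum>i\<in>I. M i) *v (x :: real^'n) = (\<Sum>i\<in>I. (M i :: real^'n^'m) *v x)"
  by (induction I rule: infinite_finite_induct) (auto simp: matrix_vector_mult_add_rdistrib)

lemma sum_outer_mult_vec: "(\<Sum>b\<in>B. f b *\<^sub>R outer b) *v x = (\<Sum>b\<in>B. (f b * (b \<bullet> x)) *\<^sub>R b)"
  by (simp add: sum_mult_vec scaleR_matrix_vector_assoc[symmetric] outer_mult_vec)

lemma sandwich_mult_vec: "(outer b ** G ** outer c) *v x = ((c \<bullet> x) * (b \<bullet> (G *v c))) *\<^sub>R b"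
  by (simp add: matrix_vector_mul_assoc[symmetric] outer_mult_vec matrix_vector_mult_scaleR)

lemma inner_sandwich_mult_vec:
  "x \<bullet> ((outer b ** G ** outer c) *v y) = (b \<bullet> x) * (c \<bullet> y) * (b \<bullet> (G *v c))"
  by (simp add: sandwich_mult_vec inner_commute)

lemma sum_outer_sandwich:
  "(\<Sum>b\<in>B. f b *\<^sub>R outer b) ** G ** (\<Sum>c\<in>C. g c *\<^sub>R outer c)
     = (\<Sum>b\<in>B. \<Sum>c\<in>C. (f b * g c) *\<^sub>R (outer b ** G ** outer c))"
  unfolding matrix_eq
proof
  fix x
  let ?M = "\<Sum>b\<in>B. f b *\<^sub>R outer b" and ?N = "\<Sum>c\<in>C. g c *\<^sub>R outer c"
  have "(?M ** G ** ?N) *v x = ?M *v (G *v (?N *v x))"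
    by (simp add: matrix_vector_mul_assoc matrix_mul_assoc)
  also have "\<dots> = (\<Sum>c\<in>C. (g c * (c \<bullet> x)) *\<^sub>R (\<Sum>b\<in>B. (f b * (b \<bullet> (G *v c))) *\<^sub>R b))"
    by (simp add: sum_outer_mult_vec linear_sum[OF matrix_vector_mul_linear] matrix_vector_mult_scaleR)
  also have "\<dots> = (\<Sum>b\<in>B. \<Sum>c\<in>C. (f b * g c * ((c \<bullet> x) * (b \<bullet> (G *v c)))) *\<^sub>R b)"
    by (subst sum.swap) (simp add: scaleR_sum_right mult_ac)
  also have "\<dots> = (\<Sum>b\<in>B. \<Sum>c\<in>C. (f b * g c) *\<^sub>R (outer b ** G ** outer c)) *v x"
    by (simp add: sum_mult_vec scaleR_matrix_vector_assoc[symmetric] sandwich_mult_vec)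
  finally show "(?M ** G ** ?N) *v x = (\<Sum>b\<in>B. \<Sum>c\<in>C. (f b * g c) *\<^sub>R (outer b ** G ** outer c)) *v x" .
qed

lemma transpose_sum: "transpose (\<Sum>i\<in>I. M i) = (\<Sum>i\<in>I. transpose (M i :: real^'n^'m))"
  by (induction I rule: infinite_finite_induct) (auto simp: transpose_def vec_eq_iff)

lemma transpose_sandwich:
  assumes "transpose G = G"
  shows "transpose (outer b ** G ** outer c) = outer c ** G ** outer b"
  using assms by (simp add: matrix_transpose_mul matrix_mul_assoc transpose_outer)

lemma transpose_symmetric_sandwich_sum:
  assumes "transpose G = G" and "\<And>b c. b \<in> B \<Longrightarrow> c \<in> B \<Longrightarrow> k c b = k b c"
  shows "transpose (\<Sum>b\<in>B. \<Sum>c\<in>B. k b c *\<^sub>R (outer b ** G ** outer c))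
           = (\<Sum>b\<in>B. \<Sum>c\<in>B. k b c *\<^sub>R (outer b ** G ** outer c))"
proof -
  have "transpose (\<Sum>b\<in>B. \<Sum>c\<in>B. k b c *\<^sub>R (outer b ** G ** outer c))
          = (\<Sum>b\<in>B. \<Sum>c\<in>B. k b c *\<^sub>R (outer c ** G ** outer b))"
    by (simp add: transpose_sum transpose_scalar transpose_sandwich[OF assms(1)])
  also have "\<dots> = (\<Sum>c\<in>B. \<Sum>b\<in>B. k c b *\<^sub>R (outer c ** G ** outer b))"
    by (subst sum.swap) (intro sum.cong refl, simp add: assms(2))
  finally show ?thesis .
qed

lemma inner_sum_mult_vec_sum:
  "(\<Sum>b\<in>B. u b *\<^sub>R b) \<bullet> ((G :: real^'n^'n) *v (\<Sum>c\<in>C. v c *\<^sub>R c))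
     = (\<Sum>b\<in>B. \<Sum>c\<in>C. u b * v c * (b \<bullet> (G *v c)))"
  unfolding inner_sum_left
  by (simp add: inner_sum_right linear_sum[OF matrix_vector_mul_linear] matrix_vector_mult_scaleR
      sum_distrib_left mult_ac)

text \<open>The Cauchy kernel \<open>1 / (\<beta>\<^sub>b + \<beta>\<^sub>c)\<close> is the Laplace integral of
  \<open>exp (-\<beta>\<^sub>b s) exp (-\<beta>\<^sub>c s)\<close>, so its Hadamard product with \<open>G\<close> is an integral of
  quadratic forms of \<open>G\<close>.\<close>

lemma cauchy_kernel_form_has_integral:
  fixes G :: "real^'n^'n" and B :: "(real^'n) set"
  assumes "finite B" and pos: "\<And>b. b \<in> B \<Longrightarrow> 0 < \<beta> b"
  shows "((\<lambda>s. (\<Sum>b\<in>B. (q b * exp (- \<beta> b * s)) *\<^sub>R b) \<bullet> (G *v (\<Sum>b\<in>B. (q b * exp (- \<beta> b * s)) *\<^sub>R b)))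
           has_integral (\<Sum>b\<in>B. \<Sum>c\<in>B. q b * q c * (b \<bullet> (G *v c)) / (\<beta> b + \<beta> c))) {0..}"
proof -
  have "((\<lambda>s. \<Sum>b\<in>B. \<Sum>c\<in>B. q b * q c * (b \<bullet> (G *v c)) * exp (- (\<beta> b + \<beta> c) * s))
          has_integral (\<Sum>b\<in>B. \<Sum>c\<in>B. q b * q c * (b \<bullet> (G *v c)) / (\<beta> b + \<beta> c))) {0..}"
  proof (intro has_integral_sum \<open>finite B\<close>)
    fix b c assume "b \<in> B" "c \<in> B"
    then have "0 < \<beta> b + \<beta> c" using pos by (simp add: add_pos_pos)
    from has_integral_mult_right[OF has_integral_exp_minus_to_infinity[OF this, of 0]]
    show "((\<lambda>s. q b * q c * (b \<bullet> (G *v c)) * exp (- (\<beta> b + \<beta> c) * s))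
            has_integral q b * q c * (b \<bullet> (G *v c)) / (\<beta> b + \<beta> c)) {0..}"
      by simp
  qed
  then show ?thesis
    unfolding inner_sum_mult_vec_sum by (simp add: exp_add[symmetric] algebra_simps)
qed

lemma matrix_inv_eqI:
  fixes A A' :: "real^'n^'n"
  assumes "A ** A' = mat 1" and "A' ** A = mat 1"
  shows "matrix_inv A = A'"
proof -
  have "A ** matrix_inv A = mat 1 \<and> matrix_inv A ** A = mat 1"
    unfolding matrix_inv_def by (rule someI[of _ A']) (use assms in blast)
  then have "matrix_inv A = matrix_inv A ** (A ** A')" and "matrix_inv A ** A = mat 1"
    using assms(1) by auto
  then show ?thesis by (simp add: matrix_mul_assoc)
qed

context orthonormal_eigenbasis
begin

lemma sum_outer_mult:
  "(\<Sum>b\<in>B. f b *\<^sub>R outer b) ** (\<Sum>b\<in>B. g b *\<^sub>R outer b) = (\<Sum>b\<in>B. (f b * g b) *\<^sub>R outer b)"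
  unfolding matrix_eq
  by (simp add: matrix_vector_mul_assoc[symmetric] sum_outer_mult_vec inner_sum_eigenvectors mult_ac)

lemma sum_outer: "(\<Sum>b\<in>B. outer b) = mat 1"
  unfolding matrix_eq by (simp add: sum_mult_vec outer_mult_vec expansion)

lemma spectral_decomposition: "(\<Sum>b\<in>B. eig b *\<^sub>R outer b) = A"
  unfolding matrix_eq sum_outer_mult_vec by (simp add: mult_vec_expansion[symmetric])

lemma scaleR_spectral_decomposition: "(\<Sum>b\<in>B. (s * eig b) *\<^sub>R outer b) = s *\<^sub>R A"
  by (subst spectral_decomposition[symmetric]) (simp add: scaleR_sum_right)

lemma matpow_scaleR: "matpow (s *\<^sub>R A) k = (\<Sum>b\<in>B. (s * eig b) ^ k *\<^sub>R outer b)"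
proof (induction k)
  case 0
  then show ?case by (simp add: sum_outer)
next
  case (Suc k)
  have "matpow (s *\<^sub>R A) (Suc k)
          = (\<Sum>b\<in>B. (s * eig b) *\<^sub>R outer b) ** (\<Sum>b\<in>B. (s * eig b) ^ k *\<^sub>R outer b)"
    by (simp add: Suc scaleR_spectral_decomposition)
  then show ?case by (simp add: sum_outer_mult)
qed

lemma mexp_scaleR: "mexp (s *\<^sub>R A) = (\<Sum>b\<in>B. exp (s * eig b) *\<^sub>R outer b)"
proof -
  have "(\<lambda>k. (1 / fact k) *\<^sub>R matpow (s *\<^sub>R A) k)
          = (\<lambda>k. \<Sum>b\<in>B. ((s * eig b) ^ k /\<^sub>R fact k) *\<^sub>R outer b)"
    by (simp add: matpow_scaleR scaleR_sum_right divide_inverse mult.commute)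
  moreover have "(\<lambda>k. \<Sum>b\<in>B. ((s * eig b) ^ k /\<^sub>R fact k) *\<^sub>R outer b)
                   sums (\<Sum>b\<in>B. exp (s * eig b) *\<^sub>R outer b)"
    by (intro sums_sum sums_scaleR_left exp_converges)
  ultimately show ?thesis unfolding mexp_def by (simp add: sums_iff)
qed

lemma matrix_inv_eq:
  assumes "\<And>b. b \<in> B \<Longrightarrow> eig b \<noteq> 0"
  shows "matrix_inv A = (\<Sum>b\<in>B. inverse (eig b) *\<^sub>R outer b)"
proof -
  have "(\<Sum>b\<in>B. (eig b * inverse (eig b)) *\<^sub>R outer b) = mat 1"
    and "(\<Sum>b\<in>B. (inverse (eig b) * eig b) *\<^sub>R outer b) = mat 1"
    using assms by (simp_all add: sum_outer[symmetric])
  then have "matrix_inv (\<Sum>b\<in>B. eig b *\<^sub>R outer b) = (\<Sum>b\<in>B. inverse (eig b) *\<^sub>R outer b)"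
    by (intro matrix_inv_eqI) (simp_all only: sum_outer_mult)
  then show ?thesis unfolding spectral_decomposition .
qed

lemma matrix_inv_mult_vec:
  assumes "\<And>b. b \<in> B \<Longrightarrow> eig b \<noteq> 0"
  shows "matrix_inv A *v (\<Sum>b\<in>B. (eig b * f b) *\<^sub>R b) = (\<Sum>b\<in>B. f b *\<^sub>R b)"
proof -
  have "matrix_inv A *v (\<Sum>b\<in>B. (eig b * f b) *\<^sub>R b)
          = (\<Sum>b\<in>B. (inverse (eig b) * (b \<bullet> (\<Sum>c\<in>B. (eig c * f c) *\<^sub>R c))) *\<^sub>R b)"
    by (simp only: matrix_inv_eq[OF assms] sum_outer_mult_vec)
  also have "\<dots> = (\<Sum>b\<in>B. f b *\<^sub>R b)"
    by (intro sum.cong refl) (simp add: inner_sum_eigenvectors assms)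
  finally show ?thesis .
qed

lemma symmetric_matrix_inv:
  assumes "\<And>b. b \<in> B \<Longrightarrow> eig b \<noteq> 0"
  shows "transpose (matrix_inv A) = matrix_inv A"
  by (simp only: matrix_inv_eq[OF assms]) (simp add: transpose_sum transpose_scalar transpose_outer)

lemma mexp_sandwich_has_integral:
  assumes "\<And>b. b \<in> B \<Longrightarrow> r < 2 * eig b"
  shows "((\<lambda>t. exp (r * t) *\<^sub>R (mexp (- (t *\<^sub>R A)) ** G ** mexp (- (t *\<^sub>R A))))
           has_integral (\<Sum>b\<in>B. \<Sum>c\<in>B. (1 / (eig b + eig c - r)) *\<^sub>R (outer b ** G ** outer c))) {0..}"
proof -
  have "exp (r * t) *\<^sub>R (mexp (- (t *\<^sub>R A)) ** G ** mexp (- (t *\<^sub>R A)))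
          = (\<Sum>b\<in>B. \<Sum>c\<in>B. exp (- (eig b + eig c - r) * t) *\<^sub>R (outer b ** G ** outer c))" for t
  proof -
    have "- (t *\<^sub>R A) = (- t) *\<^sub>R A" by simp
    then have "exp (r * t) *\<^sub>R (mexp (- (t *\<^sub>R A)) ** G ** mexp (- (t *\<^sub>R A)))
        = (\<Sum>b\<in>B. \<Sum>c\<in>B. (exp (r * t) * (exp (- t * eig b) * exp (- t * eig c))) *\<^sub>R (outer b ** G ** outer c))"
      by (simp only: mexp_scaleR sum_outer_sandwich) (simp add: scaleR_sum_right)
    then show ?thesis by (simp add: exp_add[symmetric] algebra_simps)
  qed
  moreover have "((\<lambda>t. \<Sum>b\<in>B. \<Sum>c\<in>B. exp (- (eig b + eig c - r) * t) *\<^sub>R (outer b ** G ** outer c))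
     has_integral (\<Sum>b\<in>B. \<Sum>c\<in>B. (1 / (eig b + eig c - r)) *\<^sub>R (outer b ** G ** outer c))) {0..}"
  proof (intro has_integral_sum finite has_integral_scaleR_left)
    fix b c assume "b \<in> B" "c \<in> B"
    then have "0 < eig b + eig c - r" using assms[of b] assms[of c] by linarith
    from has_integral_exp_minus_to_infinity[OF this, of 0]
    show "((\<lambda>t. exp (- (eig b + eig c - r) * t)) has_integral (1 / (eig b + eig c - r))) {0..}"
      by simp
  qed
  ultimately show ?thesis by simp
qed

end

lemma covariance_kernel_gap_eq:
  fixes \<delta> a b :: real
  assumes "0 < \<delta>" "0 < a" "0 < b" "\<delta> * a + \<delta> * b \<noteq> 1"
  shows "\<delta> / (a + b - 1 / \<delta>) - 1 / (a * b)
           = (\<delta> - 1 / a) * (\<delta> - 1 / b) / ((\<delta> * a - 1 / 2) + (\<delta> * b - 1 / 2))"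
proof -
  obtain D where D: "D = \<delta> * a + \<delta> * b - 1" by blast
  with assms have "D \<noteq> 0" by simp
  have "a + b - 1 / \<delta> = D / \<delta>" using assms(1) D by (simp add: field_simps)
  moreover have "(\<delta> * a - 1 / 2) + (\<delta> * b - 1 / 2) = D" using D by simp
  moreover have "\<delta> / (D / \<delta>) - 1 / (a * b) = (\<delta> - 1 / a) * (\<delta> - 1 / b) / D"
    using assms(1-3) \<open>D \<noteq> 0\<close> by (simp add: field_simps) (simp add: D algebra_simps)
  ultimately show ?thesis by simp
qed

lemma sq_diff_one_div_mono:
  fixes a M :: real
  assumes "1 < a" "a \<le> M"
  shows "(a - 1)\<^sup>2 / (2 * a - 1) \<le> (M - 1)\<^sup>2 / (2 * M - 1)"
proof -
  have "(M - 1)\<^sup>2 * (2 * a - 1) - (a - 1)\<^sup>2 * (2 * M - 1) = (M - a) * (a * (M - 1) + M * (a - 1))"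
    by (simp add: algebra_simps power2_eq_square)
  also have "\<dots> \<ge> 0" using assms by simp
  finally show ?thesis using assms by (simp add: divide_le_eq le_divide_eq mult.commute)
qed

locale covariance_comparison = orthonormal_eigenbasis A B
  for A :: "real^'n^'n" and B +
  fixes G :: "real^'n^'n" and \<delta> :: real
  assumes psd_G: "psd G" and \<delta>_pos: "0 < \<delta>" and \<delta>_eig_gt_1: "b \<in> B \<Longrightarrow> 1 < \<delta> * eig b"
begin

definition cov_Sigma :: "real^'n^'n" where
  "cov_Sigma = \<delta> *\<^sub>R integral {0..} (\<lambda>t. exp (t / \<delta>) *\<^sub>R (mexp (- (t *\<^sub>R A)) ** G ** mexp (- (t *\<^sub>R A))))"

definition cov_Delta :: "real^'n^'n" where
  "cov_Delta = matrix_inv A ** G ** matrix_inv A"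

definition gap_weight :: "real^'n \<Rightarrow> real" where
  "gap_weight b = \<delta> - 1 / eig b"

definition decay_rate :: "real^'n \<Rightarrow> real" where
  "decay_rate b = \<delta> * eig b - 1 / 2"

lemma eig_pos: "b \<in> B \<Longrightarrow> 0 < eig b"
proof -
  assume "b \<in> B"
  then have "0 < \<delta> * eig b" using \<delta>_eig_gt_1 by fastforce
  then show ?thesis using \<delta>_pos by (simp add: zero_less_mult_iff)
qed

lemma decay_rate_pos: "b \<in> B \<Longrightarrow> 0 < decay_rate b"
  using \<delta>_eig_gt_1 unfolding decay_rate_def by fastforce

lemma symmetric_G: "transpose G = G"
  using psd_G unfolding psd_def by blast

lemma cov_Sigma_eq: "cov_Sigma = (\<Sum>b\<in>B. \<Sum>c\<in>B. (\<delta> / (eig b + eig c - 1 / \<delta>)) *\<^sub>R (outer b ** G ** outer c))"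
proof -
  have "1 / \<delta> < 2 * eig b" if "b \<in> B" for b
    using \<delta>_eig_gt_1[OF that] eig_pos[OF that] \<delta>_pos by (simp add: field_simps)
  from integral_unique[OF mexp_sandwich_has_integral[where r = "1 / \<delta>" and G = G, OF this]]
  show ?thesis unfolding cov_Sigma_def by (simp add: scaleR_sum_right)
qed

lemma cov_Delta_eq: "cov_Delta = (\<Sum>b\<in>B. \<Sum>c\<in>B. (1 / (eig b * eig c)) *\<^sub>R (outer b ** G ** outer c))"
proof -
  have "matrix_inv A = (\<Sum>b\<in>B. inverse (eig b) *\<^sub>R outer b)"
    using eig_pos by (intro matrix_inv_eq) force
  then show ?thesis unfolding cov_Delta_def by (simp add: sum_outer_sandwich inverse_eq_divide)
qed

lemma cov_Sigma_minus_Delta_eq: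
  "cov_Sigma - cov_Delta = (\<Sum>b\<in>B. \<Sum>c\<in>B.
     (gap_weight b * gap_weight c / (decay_rate b + decay_rate c)) *\<^sub>R (outer b ** G ** outer c))"
proof -
  have "\<delta> / (eig b + eig c - 1 / \<delta>) - 1 / (eig b * eig c)
          = gap_weight b * gap_weight c / (decay_rate b + decay_rate c)" if "b \<in> B" "c \<in> B" for b c
    unfolding gap_weight_def decay_rate_def
    using \<delta>_pos eig_pos[OF that(1)] eig_pos[OF that(2)] \<delta>_eig_gt_1[OF that(1)] \<delta>_eig_gt_1[OF that(2)]
    by (intro covariance_kernel_gap_eq) auto
  then show ?thesis
    unfolding cov_Sigma_eq cov_Delta_eq
    by (simp add: sum_subtractf[symmetric] scaleR_diff_left[symmetric] cong: sum.cong)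
qed

lemma symmetric_cov_Delta: "transpose cov_Delta = cov_Delta"
  unfolding cov_Delta_eq by (intro transpose_symmetric_sandwich_sum symmetric_G) (simp add: mult.commute)

lemma symmetric_cov_Sigma_minus_Delta: "transpose (cov_Sigma - cov_Delta) = cov_Sigma - cov_Delta"
  unfolding cov_Sigma_minus_Delta_eq
  by (intro transpose_symmetric_sandwich_sum symmetric_G) (simp add: mult.commute add.commute)

lemma cov_Sigma_minus_Delta_form_has_integral:
  "((\<lambda>s. (\<Sum>b\<in>B. (gap_weight b * (b \<bullet> x) * exp (- decay_rate b * s)) *\<^sub>R b)
          \<bullet> (G *v (\<Sum>b\<in>B. (gap_weight b * (b \<bullet> x) * exp (- decay_rate b * s)) *\<^sub>R b)))
     has_integral x \<bullet> ((cov_Sigma - cov_Delta) *v x)) {0..}"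
proof -
  have "x \<bullet> ((cov_Sigma - cov_Delta) *v x) = (\<Sum>b\<in>B. \<Sum>c\<in>B.
          gap_weight b * (b \<bullet> x) * (gap_weight c * (c \<bullet> x)) * (b \<bullet> (G *v c)) / (decay_rate b + decay_rate c))"
    unfolding cov_Sigma_minus_Delta_eq
    by (simp add: sum_mult_vec inner_sum_right scaleR_matrix_vector_assoc[symmetric] inner_sandwich_mult_vec mult_ac)
  with cauchy_kernel_form_has_integral[OF finite decay_rate_pos]
  show ?thesis by simp
qed

lemma psd_cov_Sigma_minus_Delta: "psd (cov_Sigma - cov_Delta)"
  unfolding psd_def
proof (intro conjI allI symmetric_cov_Sigma_minus_Delta)
  fix x
  show "0 \<le> x \<bullet> ((cov_Sigma - cov_Delta) *v x)"
    by (rule has_integral_nonneg[OF cov_Sigma_minus_Delta_form_has_integral])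
       (use psd_G in \<open>simp add: psd_def\<close>)
qed

lemma gap_integrand_le:
  "(\<Sum>b\<in>B. (gap_weight b * (b \<bullet> x) * exp (- decay_rate b * s)) *\<^sub>R b)
     \<bullet> (G *v (\<Sum>b\<in>B. (gap_weight b * (b \<bullet> x) * exp (- decay_rate b * s)) *\<^sub>R b))
   \<le> opnorm cov_Delta * (\<Sum>b\<in>B. (eig b * gap_weight b * (b \<bullet> x))\<^sup>2 * exp (- (2 * decay_rate b) * s))"
proof -
  let ?w = "\<Sum>b\<in>B. (gap_weight b * (b \<bullet> x) * exp (- decay_rate b * s)) *\<^sub>R b"
  let ?u = "\<Sum>b\<in>B. (eig b * (gap_weight b * (b \<bullet> x) * exp (- decay_rate b * s))) *\<^sub>R b"
  have eig_nonzero: "\<And>b. b \<in> B \<Longrightarrow> eig b \<noteq> 0" using eig_pos by force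
  have "?w = matrix_inv A *v ?u" by (simp only: matrix_inv_mult_vec[OF eig_nonzero])
  then have "?w \<bullet> (G *v ?w) = ?u \<bullet> (cov_Delta *v ?u)"
    unfolding cov_Delta_def
    by (simp add: matrix_vector_mul_assoc[symmetric]
        symmetric_matrix_inner_commute[OF symmetric_matrix_inv[OF eig_nonzero]])
  also have "\<dots> \<le> opnorm cov_Delta * (?u \<bullet> ?u)"
    by (rule symmetric_quadratic_form_le_opnorm[OF symmetric_cov_Delta])
  also have "?u \<bullet> ?u = (\<Sum>b\<in>B. (eig b * gap_weight b * (b \<bullet> x))\<^sup>2 * exp (- (2 * decay_rate b) * s))"
    unfolding inner_sum_sum
    by (intro sum.cong refl) (simp add: power2_eq_square exp_add[symmetric] algebra_simps)
  finally show ?thesis .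
qed

lemma cov_Sigma_minus_Delta_form_le:
  assumes M: "\<And>b. b \<in> B \<Longrightarrow> \<delta> * eig b \<le> M"
  shows "x \<bullet> ((cov_Sigma - cov_Delta) *v x) \<le> (M - 1)\<^sup>2 / (2 * M - 1) * opnorm cov_Delta * (x \<bullet> x)"
proof -
  let ?c = "\<lambda>b. (eig b * gap_weight b * (b \<bullet> x))\<^sup>2"
  have bound_integral: "((\<lambda>s. opnorm cov_Delta * (\<Sum>b\<in>B. ?c b * exp (- (2 * decay_rate b) * s)))
          has_integral opnorm cov_Delta * (\<Sum>b\<in>B. ?c b / (2 * decay_rate b))) {0..}"
  proof (intro has_integral_mult_right has_integral_sum finite)
    fix b assume "b \<in> B"
    then have "0 < 2 * decay_rate b" using decay_rate_pos by simp
    from has_integral_mult_right[OF has_integral_exp_minus_to_infinity[OF this, of 0]]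
    show "((\<lambda>s. ?c b * exp (- (2 * decay_rate b) * s)) has_integral ?c b / (2 * decay_rate b)) {0..}"
      by simp
  qed
  have "x \<bullet> ((cov_Sigma - cov_Delta) *v x) \<le> opnorm cov_Delta * (\<Sum>b\<in>B. ?c b / (2 * decay_rate b))"
    by (rule has_integral_le[OF cov_Sigma_minus_Delta_form_has_integral bound_integral gap_integrand_le])
  also have "\<dots> \<le> opnorm cov_Delta * (\<Sum>b\<in>B. (M - 1)\<^sup>2 / (2 * M - 1) * (b \<bullet> x)\<^sup>2)"
  proof (intro mult_left_mono sum_mono symmetric_opnorm_nonneg symmetric_cov_Delta)
    fix b assume b: "b \<in> B"
    have "eig b * gap_weight b = \<delta> * eig b - 1"
      using eig_pos[OF b] unfolding gap_weight_def by (simp add: field_simps)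
    then have "?c b / (2 * decay_rate b) = (\<delta> * eig b - 1)\<^sup>2 / (2 * (\<delta> * eig b) - 1) * (b \<bullet> x)\<^sup>2"
      unfolding decay_rate_def by (simp add: power_mult_distrib)
    also have "\<dots> \<le> (M - 1)\<^sup>2 / (2 * M - 1) * (b \<bullet> x)\<^sup>2"
      using \<delta>_eig_gt_1[OF b] M[OF b] by (intro mult_right_mono sq_diff_one_div_mono) auto
    finally show "?c b / (2 * decay_rate b) \<le> (M - 1)\<^sup>2 / (2 * M - 1) * (b \<bullet> x)\<^sup>2" .
  qed
  also have "\<dots> = (M - 1)\<^sup>2 / (2 * M - 1) * opnorm cov_Delta * (x \<bullet> x)"
    by (simp only: sum_distrib_left[symmetric] parseval[symmetric]) (simp add: mult_ac)
  finally show ?thesis .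
qed

lemma opnorm_cov_Sigma_minus_Delta_le:
  assumes "\<And>b. b \<in> B \<Longrightarrow> \<delta> * eig b \<le> M"
  shows "opnorm (cov_Sigma - cov_Delta) \<le> (M - 1)\<^sup>2 / (2 * M - 1) * opnorm cov_Delta"
  using psd_cov_Sigma_minus_Delta cov_Sigma_minus_Delta_form_le[OF assms] by (rule psd_opnorm_le)

end

theorem proposition3:
  fixes \<Phi> :: "real^'n \<Rightarrow> real" and \<theta>s :: "real^'n"
    and H \<Gamma> :: "real^'n^'n" and \<delta> :: real
  assumes unique_min: "\<forall>\<theta>. \<theta> \<noteq> \<theta>s \<longrightarrow> \<Phi> \<theta>s < \<Phi> \<theta>"
    and C2: "C2_near_with_hessian \<Phi> \<theta>s H"
    and H_pd: "posdef H"
    and \<Gamma>_psd: "psd \<Gamma>"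
    and \<delta>: "\<delta> > 1 / Min (eigenvalues H)"
  defines "\<Sigma> \<equiv> \<delta> *\<^sub>R integral {0..}
             (\<lambda>t. exp (t / \<delta>) *\<^sub>R (mexp (- (t *\<^sub>R H)) ** \<Gamma> ** mexp (- (t *\<^sub>R H))))"
    and "\<Delta> \<equiv> matrix_inv H ** \<Gamma> ** matrix_inv H"
  shows "psd (\<Sigma> - \<Delta>)
    \<and> opnorm (\<Sigma> - \<Delta>) \<le> (\<delta> * Max (eigenvalues H) - 1)^2 / (2 * \<delta> * Max (eigenvalues H) - 1) * opnorm \<Delta>"
proof -
  \<comment> \<open>\<open>unique_min\<close> and \<open>C2\<close> only say where \<open>H\<close> comes from; the claim is linear algebra in \<open>H\<close> and \<open>\<Gamma>\<close>.\<close>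
  have "transpose H = H" using H_pd unfolding posdef_def by blast
  then obtain B where "orthonormal_eigenbasis H B" by (rule symmetric_orthonormal_eigenbasis)
  then interpret H: orthonormal_eigenbasis H B .
  have Min_pos: "0 < Min (eigenvalues H)"
    unfolding H.eigenvalues_eq using H.finite H.nonempty H.eig_pos_if_posdef[OF H_pd] by simp
  have "0 < 1 / Min (eigenvalues H)" using Min_pos by simp
  with \<delta> have "0 < \<delta>" by linarith
  have "1 < \<delta> * Min (eigenvalues H)" using \<delta> Min_pos by (simp add: divide_less_eq mult.commute)
  also have "\<dots> \<le> \<delta> * H.eig b" if "b \<in> B" for b
    using H.Min_eigenvalues_le[OF that] \<open>0 < \<delta>\<close> by simp
  finally interpret covariance_comparison H B \<Gamma> \<delta>
    using \<Gamma>_psd \<open>0 < \<delta>\<close> by unfold_locales auto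
  have "\<Sigma> = cov_Sigma" and "\<Delta> = cov_Delta" by (simp_all add: \<Sigma>_def \<Delta>_def cov_Sigma_def cov_Delta_def)
  moreover have "\<delta> * H.eig b \<le> \<delta> * Max (eigenvalues H)" if "b \<in> B" for b
    using H.le_Max_eigenvalues[OF that] \<open>0 < \<delta>\<close> by simp
  ultimately show ?thesis using psd_cov_Sigma_minus_Delta opnorm_cov_Sigma_minus_Delta_le by (simp add: mult.assoc)
qed

end
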